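(* Let $b>1$, $p\ge1$ and $R\subseteq\{0,\ldots,p-1\}$ be such that $(p,R)$ is proper, and let $k$ be the greatest divisor of $p$ coprime with $b$. Then the minimisation of $\mathcal{A}_{R,p}$ possesses exactly $k$ states that belong to $0$-circuits.
   Context: $A_b=\{0,\ldots,b-1\}$. $\mathcal{A}_{R,p}$ is the complete deterministic automaton over $A_b$ with states $\{0,\ldots,p-1\}$, initial state $0$, final states $R$, and transitions $n\xrightarrow{a}(nb+a)\bmod p$. $(p,R)$ is proper if $p$ is the smallest period of $R+p\mathbb{N}$, i.e. there are no $1\le p'<p$ and $R'\subseteq\{0,\ldots,p'-1\}$ with $R+p\mathbb{N}=R'+p'\mathbb{N}$. The minimisation of a complete deterministic automaton is the (unique up to isomorphism) complete deterministic automaton with the fewest states accepting the same language. A $0$-circuit is a circuit all of whose transitions are labelled by the digit $0$. *)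

theory Defs
  imports Main "HOL-Computational_Algebra.Primes"
begin

definition complete_dfa :: "nat \<Rightarrow> nat set \<Rightarrow> nat \<Rightarrow> nat set \<Rightarrow> (nat \<Rightarrow> nat \<Rightarrow> nat) \<Rightarrow> bool" where
  "complete_dfa b Q q0 F delta \<longleftrightarrow>
     finite Q \<and> q0 \<in> Q \<and> F \<subseteq> Q \<and> (\<forall>q\<in>Q. \<forall>a<b. delta q a \<in> Q)"

definition dfa_lang :: "nat \<Rightarrow> nat \<Rightarrow> nat set \<Rightarrow> (nat \<Rightarrow> nat \<Rightarrow> nat) \<Rightarrow> nat list set" where
  "dfa_lang b q0 F delta = {w. set w \<subseteq> {..<b} \<and> foldl delta q0 w \<in> F}"

definition A_delta :: "nat \<Rightarrow> nat \<Rightarrow> nat \<Rightarrow> nat \<Rightarrow> nat" where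
  "A_delta b p n a = (n * b + a) mod p"

definition A_lang :: "nat \<Rightarrow> nat \<Rightarrow> nat set \<Rightarrow> nat list set" where
  "A_lang b p R = dfa_lang b 0 R (A_delta b p)"

definition is_minimisation :: "nat \<Rightarrow> nat list set \<Rightarrow> nat set \<Rightarrow> nat \<Rightarrow> nat set \<Rightarrow> (nat \<Rightarrow> nat \<Rightarrow> nat) \<Rightarrow> bool" where
  "is_minimisation b L Q q0 F delta \<longleftrightarrow>
     complete_dfa b Q q0 F delta \<and> dfa_lang b q0 F delta = L \<and>
     (\<forall>Q' q0' F' delta'. complete_dfa b Q' q0' F' delta' \<and> dfa_lang b q0' F' delta' = L
        \<longrightarrow> card Q \<le> card Q')"

definition on_zero_circuit :: "(nat \<Rightarrow> nat \<Rightarrow> nat) \<Rightarrow> nat \<Rightarrow> bool" where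
  "on_zero_circuit delta q \<longleftrightarrow> (\<exists>n\<ge>1. ((\<lambda>s. delta s 0) ^^ n) q = q)"

definition per_set :: "nat set \<Rightarrow> nat \<Rightarrow> nat set" where
  "per_set R p = {r + p * n | r n. r \<in> R}"

definition proper :: "nat \<Rightarrow> nat set \<Rightarrow> bool" where
  "proper p R \<longleftrightarrow>
     \<not> (\<exists>p' R'. 1 \<le> p' \<and> p' < p \<and> R' \<subseteq> {..<p'} \<and> per_set R p = per_set R' p')"

end

theory Submission
  imports Defs "HOL-Number_Theory.Residues"
begin

text \<open>In a minimal automaton for the language of A_{R,p}, the state reached after reading a word
  depends only on the value n mod p of the word, two residues reach the same state iff they are
  Nerode-equivalent, and the 0-transition multiplies the residue by b. Write p = g k, where k is
  the greatest divisor of p coprime with b. Every prime factor of g divides b, so g divides b^g,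
  and iterating the 0-transition on any state eventually reaches the state of a multiple g i of g,
  i < k; hence every state on a 0-circuit is of this form. Conversely b^\<phi>(k) \<equiv> 1 (mod k) puts
  every such state on a 0-circuit. These k states are pairwise distinct: if g i and g j were
  Nerode-equivalent, R + pN would be invariant under a shift not divisible by p, hence under a
  proper divisor of p, contradicting properness.\<close>

section \<open>Minimal automata\<close>

lemma foldl_in_states:
  assumes "complete_dfa b Q q0 F delta" "q \<in> Q" "set w \<subseteq> {..<b}"
  shows "foldl delta q w \<in> Q"
  using assms(2,3)
proof (induction w arbitrary: q)
  case (Cons a w)
  then have "delta q a \<in> Q" using assms(1) unfolding complete_dfa_def by auto
  with Cons show ?case by simp
qed simp

lemma minimisation_exists:
  assumes "complete_dfa b Q q0 F delta"
  shows "\<exists>Q' q0' F' delta'. is_minimisation b (dfa_lang b q0 F delta) Q' q0' F' delta'"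
proof -
  define size_ok where "size_ok n \<longleftrightarrow> (\<exists>Q' q0' F' delta'. complete_dfa b Q' q0' F' delta'
      \<and> dfa_lang b q0' F' delta' = dfa_lang b q0 F delta \<and> card Q' = n)" for n
  have "size_ok (card Q)" using assms unfolding size_ok_def by blast
  then have "size_ok (LEAST n. size_ok n)" by (rule LeastI)
  then obtain Q' q0' F' delta' where Q': "complete_dfa b Q' q0' F' delta'"
      "dfa_lang b q0' F' delta' = dfa_lang b q0 F delta" "card Q' = (LEAST n. size_ok n)"
    unfolding size_ok_def by blast
  have "is_minimisation b (dfa_lang b q0 F delta) Q' q0' F' delta'"
    unfolding is_minimisation_def
  proof (intro conjI Q'(1,2) allI impI)
    fix Q'' q0'' F'' delta''
    assume "complete_dfa b Q'' q0'' F'' delta'' \<and> dfa_lang b q0'' F'' delta'' = dfa_lang b q0 F delta"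
    then have "size_ok (card Q'')" unfolding size_ok_def by blast
    then show "card Q' \<le> card Q''" unfolding Q'(3) by (rule Least_le)
  qed
  then show ?thesis by blast
qed

lemma minimisation_reachable:
  assumes min: "is_minimisation b L Q q0 F delta" and "q \<in> Q"
  obtains w where "set w \<subseteq> {..<b}" "foldl delta q0 w = q"
proof -
  have dfa: "complete_dfa b Q q0 F delta" and lang: "dfa_lang b q0 F delta = L"
    using min unfolding is_minimisation_def by blast+
  define Q' where "Q' = {foldl delta q0 w | w. set w \<subseteq> {..<b}}"
  have "Q' \<subseteq> Q"
    unfolding Q'_def using foldl_in_states[OF dfa] dfa unfolding complete_dfa_def by auto
  moreover have "finite Q" using dfa unfolding complete_dfa_def by simp
  moreover have "q0 \<in> Q'" unfolding Q'_def by (auto intro: exI[of _ "[]"])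
  moreover have "delta q a \<in> Q'" if "q \<in> Q'" "a < b" for q a
  proof -
    obtain w where "set w \<subseteq> {..<b}" "q = foldl delta q0 w" using \<open>q \<in> Q'\<close> unfolding Q'_def by auto
    then have "delta q a = foldl delta q0 (w @ [a])" "set (w @ [a]) \<subseteq> {..<b}" using \<open>a < b\<close> by auto
    then show ?thesis unfolding Q'_def by blast
  qed
  ultimately have "complete_dfa b Q' q0 (F \<inter> Q') delta"
    unfolding complete_dfa_def using finite_subset by blast
  moreover have "dfa_lang b q0 (F \<inter> Q') delta = L"
    using lang unfolding dfa_lang_def Q'_def by auto
  ultimately have "card Q \<le> card Q'" using min unfolding is_minimisation_def by blast
  then have "Q' = Q" using card_seteq \<open>Q' \<subseteq> Q\<close> \<open>finite Q\<close> by blast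
  with \<open>q \<in> Q\<close> that show ?thesis unfolding Q'_def by blast
qed

lemma merge_equivalent_states:
  assumes dfa: "complete_dfa b Q q0 F delta" and "q1 \<in> Q" "q1 \<noteq> q2"
    and equiv: "\<And>w. set w \<subseteq> {..<b} \<Longrightarrow> foldl delta q1 w \<in> F \<longleftrightarrow> foldl delta q2 w \<in> F"
  defines "h \<equiv> \<lambda>s. if s = q2 then q1 else s"
  shows "complete_dfa b (Q - {q2}) (h q0) (F - {q2}) (\<lambda>s a. h (delta s a))"
    and "dfa_lang b (h q0) (F - {q2}) (\<lambda>s a. h (delta s a)) = dfa_lang b q0 F delta"
proof -
  have h_in: "s \<in> Q \<Longrightarrow> h s \<in> Q - {q2}" for s using \<open>q1 \<in> Q\<close> \<open>q1 \<noteq> q2\<close> unfolding h_def by auto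
  have closed: "\<forall>q\<in>Q. \<forall>a<b. delta q a \<in> Q" using dfa unfolding complete_dfa_def by blast
  show "complete_dfa b (Q - {q2}) (h q0) (F - {q2}) (\<lambda>s a. h (delta s a))"
    using dfa h_in closed unfolding complete_dfa_def by auto
  have run: "foldl (\<lambda>s a. h (delta s a)) (h s) w \<in> F - {q2} \<longleftrightarrow> foldl delta s w \<in> F"
    if "s \<in> Q" "set w \<subseteq> {..<b}" for s w
    using that
  proof (induction w arbitrary: s)
    case Nil
    then show ?case using equiv[of "[]"] \<open>q1 \<noteq> q2\<close> unfolding h_def by auto
  next
    case (Cons a w)
    then have "delta (h s) a \<in> Q" using h_in closed by auto
    moreover have "foldl delta (delta (h s) a) w \<in> F \<longleftrightarrow> foldl delta (delta s a) w \<in> F"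
      using equiv[of "a # w"] Cons.prems unfolding h_def by auto
    ultimately show ?case using Cons by simp
  qed
  show "dfa_lang b (h q0) (F - {q2}) (\<lambda>s a. h (delta s a)) = dfa_lang b q0 F delta"
    using run dfa unfolding dfa_lang_def complete_dfa_def by auto
qed

lemma minimisation_states_eq:
  assumes min: "is_minimisation b L Q q0 F delta" and "q1 \<in> Q" "q2 \<in> Q"
    and equiv: "\<And>w. set w \<subseteq> {..<b} \<Longrightarrow> foldl delta q1 w \<in> F \<longleftrightarrow> foldl delta q2 w \<in> F"
  shows "q1 = q2"
proof (rule ccontr)
  assume "q1 \<noteq> q2"
  have dfa: "complete_dfa b Q q0 F delta" and "dfa_lang b q0 F delta = L"
    using min unfolding is_minimisation_def by blast+
  with merge_equivalent_states[OF dfa \<open>q1 \<in> Q\<close> \<open>q1 \<noteq> q2\<close> equiv] min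
  have "card Q \<le> card (Q - {q2})" unfolding is_minimisation_def by blast
  moreover have "card (Q - {q2}) < card Q"
    using dfa \<open>q2 \<in> Q\<close> unfolding complete_dfa_def by (meson card_Diff1_less)
  ultimately show False by simp
qed

definition base_val :: "nat \<Rightarrow> nat list \<Rightarrow> nat" where
  "base_val b w = foldl (\<lambda>n a. n * b + a) 0 w"

lemma foldl_horner: "foldl (\<lambda>n a. n * b + a) n w = n * b ^ length w + base_val b w"
  unfolding base_val_def
proof (induction w arbitrary: n)
  case (Cons a w)
  show ?case using Cons[of "n * b + a"] Cons[of a] by (simp add: algebra_simps)
qed simp

lemma base_val_append: "base_val b (u @ w) = base_val b u * b ^ length w + base_val b w"
  using foldl_horner[of b "base_val b u" w] by (simp add: base_val_def)

lemma foldl_A_delta: "foldl (A_delta b p) 0 w = base_val b w mod p"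
proof -
  have "foldl (A_delta b p) (n mod p) w = foldl (\<lambda>n a. n * b + a) n w mod p" for n
  proof (induction w arbitrary: n)
    case (Cons a w)
    have "A_delta b p (n mod p) a = (n * b + a) mod p"
      unfolding A_delta_def by (metis mod_add_left_eq mod_mult_left_eq)
    then show ?case using Cons[of "n * b + a"] by simp
  qed simp
  from this[of 0] show ?thesis by (simp add: base_val_def)
qed

lemma A_lang_eq: "A_lang b p R = {w. set w \<subseteq> {..<b} \<and> base_val b w mod p \<in> R}"
  unfolding A_lang_def dfa_lang_def foldl_A_delta by simp

fun digits :: "nat \<Rightarrow> nat \<Rightarrow> nat \<Rightarrow> nat list" where
  "digits b 0 n = []"
| "digits b (Suc l) n = digits b l (n div b) @ [n mod b]"

lemma length_digits [simp]: "length (digits b l n) = l"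
  by (induction l arbitrary: n) auto

lemma set_digits: "b > 0 \<Longrightarrow> set (digits b l n) \<subseteq> {..<b}"
  by (induction l arbitrary: n) auto

lemma base_val_digits: "base_val b (digits b l n) = n mod b ^ l"
proof (induction l arbitrary: n)
  case (Suc l)
  have "base_val b (digits b (Suc l) n) = (n div b) mod b ^ l * b + n mod b"
    using Suc base_val_append[of b "digits b l (n div b)" "[n mod b]"] by (simp add: base_val_def)
  also have "\<dots> = n mod b ^ Suc l" by (simp add: mod_mult2_eq)
  finally show ?case .
qed (simp add: base_val_def)

lemma base_val_digits_less:
  assumes "b > 1" "n < p"
  shows "base_val b (digits b p n) = n"
proof -
  have "p < 2 ^ p" by simp
  also have "(2::nat) ^ p \<le> b ^ p" using \<open>b > 1\<close> by (simp add: power_mono)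
  finally show ?thesis using \<open>n < p\<close> by (simp add: base_val_digits)
qed

section \<open>Periods of sets of naturals\<close>

definition has_period :: "nat set \<Rightarrow> nat \<Rightarrow> bool" where
  "has_period S d \<longleftrightarrow> (\<forall>y. y \<in> S \<longleftrightarrow> y + d \<in> S)"

lemma has_period_mult:
  assumes "has_period S d"
  shows "y \<in> S \<longleftrightarrow> y + c * d \<in> S"
proof (induction c)
  case (Suc c)
  have "y + c * d \<in> S \<longleftrightarrow> y + c * d + d \<in> S" using assms unfolding has_period_def by blast
  then show ?case using Suc by (simp add: ac_simps)
qed simp

lemma has_period_gcd:
  assumes "has_period S d" "has_period S p" "d \<noteq> 0"
  shows "has_period S (gcd d p)"
  unfolding has_period_def
proof
  fix y
  obtain u v where uv: "d * u = p * v + gcd d p" using bezout_nat[OF \<open>d \<noteq> 0\<close>] by blast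
  have "y \<in> S \<longleftrightarrow> y + u * d \<in> S" using has_period_mult[OF assms(1)] .
  also have "y + u * d = (y + gcd d p) + v * p" using uv by (simp add: algebra_simps)
  also have "\<dots> \<in> S \<longleftrightarrow> y + gcd d p \<in> S" using has_period_mult[OF assms(2)] by simp
  finally show "y \<in> S \<longleftrightarrow> y + gcd d p \<in> S" .
qed

lemma mem_per_set_iff:
  assumes "R \<subseteq> {..<p}"
  shows "y \<in> per_set R p \<longleftrightarrow> y mod p \<in> R"
proof
  assume "y \<in> per_set R p"
  then obtain r n where "r \<in> R" "y = r + p * n" unfolding per_set_def by blast
  with assms show "y mod p \<in> R" by auto
next
  assume "y mod p \<in> R"
  moreover have "y = y mod p + p * (y div p)" by simp
  ultimately show "y \<in> per_set R p" unfolding per_set_def by blast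
qed

lemma per_set_has_period: "R \<subseteq> {..<p} \<Longrightarrow> has_period (per_set R p) p"
  unfolding has_period_def by (simp add: mem_per_set_iff)

lemma has_period_eq_per_set:
  assumes "has_period S d" "d \<ge> 1"
  shows "S = per_set {r \<in> S. r < d} d"
proof -
  have "y \<in> S \<longleftrightarrow> y mod d \<in> S" for y
    using has_period_mult[OF assms(1), of "y mod d" "y div d"] by simp
  moreover have "{r \<in> S. r < d} \<subseteq> {..<d}" by auto
  ultimately have "y \<in> S \<longleftrightarrow> y \<in> per_set {r \<in> S. r < d} d" for y
    using assms(2) by (simp add: mem_per_set_iff)
  then show ?thesis by blast
qed

lemma not_proper_if_has_period:
  assumes "p \<ge> 1" "R \<subseteq> {..<p}" "has_period (per_set R p) d" "\<not> p dvd d"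
  shows "\<not> proper p R"
proof -
  define p' where "p' = gcd d p"
  have "d \<noteq> 0" using assms(4) by (metis dvd_0_right)
  have "p' \<ge> 1" "p' \<le> p" using assms(1) unfolding p'_def by (simp_all add: Suc_le_eq gcd_le2_nat)
  moreover have "p' \<noteq> p" using assms(4) unfolding p'_def by (metis gcd_dvd1)
  ultimately have "p' < p" by simp
  have "has_period (per_set R p) p'"
    unfolding p'_def using has_period_gcd assms(3) per_set_has_period[OF assms(2)] \<open>d \<noteq> 0\<close> by blast
  then have "per_set R p = per_set {r \<in> per_set R p. r < p'} p'"
    using \<open>p' \<ge> 1\<close> by (rule has_period_eq_per_set)
  moreover have "{r \<in> per_set R p. r < p'} \<subseteq> {..<p'}" by auto
  ultimately have "\<exists>p' R'. 1 \<le> p' \<and> p' < p \<and> R' \<subseteq> {..<p'} \<and> per_set R p = per_set R' p'"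
    using \<open>p' < p\<close> \<open>p' \<ge> 1\<close> by blast
  then show ?thesis unfolding proper_def by simp
qed

section \<open>Nerode equivalence of residues\<close>

definition nerode_equiv :: "nat \<Rightarrow> nat \<Rightarrow> nat set \<Rightarrow> nat \<Rightarrow> nat \<Rightarrow> bool" where
  "nerode_equiv b p R n m \<longleftrightarrow> (\<forall>w. set w \<subseteq> {..<b} \<longrightarrow>
     ((n * b ^ length w + base_val b w) mod p \<in> R \<longleftrightarrow> (m * b ^ length w + base_val b w) mod p \<in> R))"

lemma nerode_equiv_has_period:
  assumes "b > 1" "p \<ge> 1" "R \<subseteq> {..<p}" "nerode_equiv b p R n m" "n \<le> m"
  shows "has_period (per_set R p) ((m - n) * b ^ p)"
  unfolding has_period_def
proof
  fix y
  define B where "B = b ^ p"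
  define x where "x = (y + n * B * (p - 1)) mod p"
  \<comment> \<open>appending the p digits of x to n leads to y modulo p, and to y + (m - n) B from m\<close>
  have "(n * B + x) mod p = (n * B + (y + n * B * (p - 1))) mod p"
    unfolding x_def by (simp add: mod_add_right_eq)
  also have "n * B + (y + n * B * (p - 1)) = y + p * (n * B)"
    using \<open>p \<ge> 1\<close> by (cases p) (simp_all add: algebra_simps)
  finally have n_x: "(n * B + x) mod p = y mod p" by simp
  have "m * B + x = (m - n) * B + (n * B + x)"
    using \<open>n \<le> m\<close> by (simp add: diff_mult_distrib)
  then have "(m * B + x) mod p = ((m - n) * B + (n * B + x) mod p) mod p"
    by (metis mod_add_right_eq)
  also have "\<dots> = ((m - n) * B + y mod p) mod p" by (simp only: n_x)
  also have "\<dots> = (y + (m - n) * B) mod p" by (metis add.commute mod_add_left_eq)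
  finally have m_x: "(m * B + x) mod p = (y + (m - n) * B) mod p" .
  have "x < p" unfolding x_def using \<open>p \<ge> 1\<close> by simp
  then have w: "set (digits b p x) \<subseteq> {..<b}" "base_val b (digits b p x) = x"
    using set_digits base_val_digits_less \<open>b > 1\<close> by simp_all
  have "(n * B + x) mod p \<in> R \<longleftrightarrow> (m * B + x) mod p \<in> R"
    using assms(4)[unfolded nerode_equiv_def, rule_format, OF w(1)] w(2) unfolding B_def by simp
  then show "y \<in> per_set R p \<longleftrightarrow> y + (m - n) * b ^ p \<in> per_set R p"
    using n_x m_x mem_per_set_iff[OF assms(3)] unfolding B_def by simp
qed

lemma nerode_equiv_multiples_eq:
  assumes "b > 1" "p \<ge> 1" "R \<subseteq> {..<p}" "proper p R" "p = g * k" "coprime k b"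
    and "i < k" "j < k" "nerode_equiv b p R (g * i) (g * j)"
  shows "i = j"
proof -
  have "\<not> nerode_equiv b p R (g * i) (g * j)" if "i < j" "j < k" for i j
  proof
    assume equiv: "nerode_equiv b p R (g * i) (g * j)"
    have "g \<noteq> 0" using \<open>p \<ge> 1\<close> \<open>p = g * k\<close> by auto
    have "\<not> p dvd (g * j - g * i) * b ^ p"
    proof
      assume "p dvd (g * j - g * i) * b ^ p"
      moreover have "(g * j - g * i) * b ^ p = g * ((j - i) * b ^ p)"
        by (simp add: diff_mult_distrib2)
      ultimately have "g * k dvd g * ((j - i) * b ^ p)" using \<open>p = g * k\<close> by metis
      then have "k dvd (j - i) * b ^ p" using \<open>g \<noteq> 0\<close> by simp
      then have "k dvd j - i" using \<open>coprime k b\<close> by (simp add: coprime_dvd_mult_left_iff)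
      then show False using \<open>i < j\<close> \<open>j < k\<close> by (auto dest: dvd_imp_le)
    qed
    moreover have "g * i \<le> g * j" using \<open>i < j\<close> by simp
    ultimately show False
      using nerode_equiv_has_period[OF assms(1-3) equiv] not_proper_if_has_period assms(2-4) by blast
  qed
  moreover have "nerode_equiv b p R (g * j) (g * i)"
    using assms(9) unfolding nerode_equiv_def by auto
  ultimately show ?thesis
    using assms(7-9) by (cases i j rule: linorder_cases) auto
qed

lemma greatest_coprime_divisor:
  fixes p b :: nat
  assumes "p \<ge> 1" "k = (GREATEST d. d dvd p \<and> coprime d b)"
  shows "k dvd p" "coprime k b" "\<And>d. d dvd p \<Longrightarrow> coprime d b \<Longrightarrow> d \<le> k"
proof -
  have bound: "d dvd p \<and> coprime d b \<Longrightarrow> d \<le> p" for d using assms(1) by (auto intro: dvd_imp_le)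
  have "k dvd p \<and> coprime k b"
    unfolding assms(2) by (rule GreatestI_nat[where k = 1]) (use bound in auto)
  then show "k dvd p" "coprime k b" by blast+
  show "\<And>d. d dvd p \<Longrightarrow> coprime d b \<Longrightarrow> d \<le> k"
    unfolding assms(2) using bound by (intro Greatest_le_nat) auto
qed

lemma prime_divisor_of_cofactor_dvd:
  fixes b p g k q :: nat
  assumes "p = g * k" "p \<ge> 1" "coprime k b" "\<And>d. d dvd p \<Longrightarrow> coprime d b \<Longrightarrow> d \<le> k"
    and "prime q" "q dvd g"
  shows "q dvd b"
proof (rule ccontr)
  assume "\<not> q dvd b"
  then have "coprime (q * k) b" using \<open>prime q\<close> \<open>coprime k b\<close> prime_imp_coprime by auto
  moreover have "q * k dvd p" using \<open>p = g * k\<close> \<open>q dvd g\<close> by simp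
  ultimately have "q * k \<le> k" using assms(4) by blast
  moreover have "k \<ge> 1" using \<open>p = g * k\<close> \<open>p \<ge> 1\<close> by (cases k) auto
  ultimately show False using prime_ge_2_nat[OF \<open>prime q\<close>] by (simp add: mult_le_cancel2)
qed

lemma dvd_power_self_if_prime_divisors_dvd:
  fixes g b :: nat
  assumes "g > 0" "\<And>q. prime q \<Longrightarrow> q dvd g \<Longrightarrow> q dvd b"
  shows "g dvd b ^ g"
  using assms
proof (induction g rule: less_induct)
  case (less g)
  show ?case
  proof (cases "g = 1")
    case False
    then obtain q where "prime q" "q dvd g" using prime_factor_nat by blast
    then obtain h where g: "g = q * h" by blast
    have "h > 0" "h < g" using less.prems(1) g prime_gt_1_nat[OF \<open>prime q\<close>] by auto
    then have "h dvd b ^ h" using less.IH less.prems(2) g by simp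
    then have "g dvd b ^ Suc h" using g less.prems(2)[OF \<open>prime q\<close> \<open>q dvd g\<close>] by (simp add: mult_dvd_mono)
    also have "b ^ Suc h dvd b ^ g" using \<open>h < g\<close> by (intro le_imp_power_dvd) simp
    finally show ?thesis .
  qed simp
qed

section \<open>Minimisations of A_{R,p}\<close>

locale A_minimisation =
  fixes b p :: nat and R Q :: "nat set" and q0 :: nat and F :: "nat set"
    and delta :: "nat \<Rightarrow> nat \<Rightarrow> nat"
  assumes base: "b > 1" and modulus: "p \<ge> 1"
    and minimisation: "is_minimisation b (A_lang b p R) Q q0 F delta"
begin

text \<open>p base-b digits suffice to write every residue n < p, since p < b^p.\<close>

definition state :: "nat \<Rightarrow> nat" where
  "state n = foldl delta q0 (digits b p n)"

lemma dfa: "complete_dfa b Q q0 F delta"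
  and lang: "dfa_lang b q0 F delta = A_lang b p R"
  using minimisation unfolding is_minimisation_def by blast+

lemma initial_state: "q0 \<in> Q"
  using dfa unfolding complete_dfa_def by blast

lemma digits_alphabet: "set (digits b l n) \<subseteq> {..<b}"
  using set_digits base by simp

lemma accepted_after:
  assumes "set u \<subseteq> {..<b}" "set w \<subseteq> {..<b}"
  shows "foldl delta (foldl delta q0 u) w \<in> F \<longleftrightarrow>
     ((base_val b u mod p) * b ^ length w + base_val b w) mod p \<in> R"
proof -
  have "foldl delta (foldl delta q0 u) w \<in> F \<longleftrightarrow> u @ w \<in> dfa_lang b q0 F delta"
    using assms unfolding dfa_lang_def by simp
  also have "\<dots> \<longleftrightarrow> u @ w \<in> A_lang b p R" by (simp only: lang)
  also have "\<dots> \<longleftrightarrow> base_val b (u @ w) mod p \<in> R" using assms by (simp add: A_lang_eq)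
  also have "base_val b (u @ w) mod p = ((base_val b u mod p) * b ^ length w + base_val b w) mod p"
    unfolding base_val_append by (metis mod_add_left_eq mod_mult_left_eq)
  finally show ?thesis .
qed

lemma reached_eq_iff:
  assumes "set u \<subseteq> {..<b}" "set v \<subseteq> {..<b}"
  shows "foldl delta q0 u = foldl delta q0 v \<longleftrightarrow>
     nerode_equiv b p R (base_val b u mod p) (base_val b v mod p)"
proof
  assume "nerode_equiv b p R (base_val b u mod p) (base_val b v mod p)"
  then show "foldl delta q0 u = foldl delta q0 v"
    using assms accepted_after foldl_in_states[OF dfa initial_state]
    by (intro minimisation_states_eq[OF minimisation]) (auto simp: nerode_equiv_def)
next
  assume eq: "foldl delta q0 u = foldl delta q0 v"
  show "nerode_equiv b p R (base_val b u mod p) (base_val b v mod p)"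
    unfolding nerode_equiv_def
  proof (intro allI impI)
    fix w assume "set w \<subseteq> {..<b}"
    with accepted_after[OF assms(1)] accepted_after[OF assms(2)] eq
    show "(base_val b u mod p * b ^ length w + base_val b w) mod p \<in> R \<longleftrightarrow>
        (base_val b v mod p * b ^ length w + base_val b w) mod p \<in> R" by metis
  qed
qed

lemma reached_state:
  assumes "set u \<subseteq> {..<b}"
  shows "foldl delta q0 u = state (base_val b u mod p)"
  unfolding state_def using assms digits_alphabet base_val_digits_less[OF base] modulus
  by (subst reached_eq_iff) (auto simp: nerode_equiv_def)

lemma states_eq: "Q = state ` {..<p}"
proof
  show "Q \<subseteq> state ` {..<p}"
  proof
    fix q assume "q \<in> Q"
    then obtain u where "set u \<subseteq> {..<b}" "foldl delta q0 u = q"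
      using minimisation_reachable[OF minimisation] by blast
    then show "q \<in> state ` {..<p}" using reached_state modulus by auto
  qed
  show "state ` {..<p} \<subseteq> Q"
    unfolding state_def using foldl_in_states[OF dfa initial_state] digits_alphabet by auto
qed

lemma state_eq_imp_nerode_equiv:
  assumes "n < p" "m < p" "state n = state m"
  shows "nerode_equiv b p R n m"
  using assms reached_eq_iff[OF digits_alphabet digits_alphabet] base_val_digits_less[OF base]
  unfolding state_def by simp

lemma zero_iterate_state:
  "((\<lambda>s. delta s 0) ^^ j) (state n) = state (n * b ^ j mod p)" if "n < p"
proof (induction j)
  case (Suc j)
  have "((\<lambda>s. delta s 0) ^^ Suc j) (state n) = foldl delta q0 (digits b p (n * b ^ j mod p) @ [0])"
    using Suc by (simp add: state_def)
  also have "\<dots> = state (base_val b (digits b p (n * b ^ j mod p) @ [0]) mod p)"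
    using digits_alphabet base by (intro reached_state) auto
  also have "base_val b (digits b p (n * b ^ j mod p) @ [0]) = (n * b ^ j mod p) * b"
    using modulus base_val_digits_less[OF base, of "n * b ^ j mod p" p]
    by (simp add: base_val_append base_val_def)
  also have "(n * b ^ j mod p) * b mod p = n * b ^ Suc j mod p"
    by (simp only: mod_mult_left_eq power_Suc2 mult.assoc)
  finally show ?case .
qed (simp add: that)

lemma multiple_state_on_zero_circuit:
  assumes "p = g * k" "coprime k b" "i < k"
  shows "on_zero_circuit delta (state (g * i))"
proof -
  define j where "j = totient k"
  have "g * i < p" using assms modulus by simp
  have "[b ^ j = 1] (mod k)"
    unfolding j_def using \<open>coprime k b\<close> by (intro euler_theorem) (simp add: coprime_commute)
  then have "k dvd b ^ j - 1" by (rule cong_to_1_nat)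
  then obtain c where "b ^ j - 1 = k * c" unfolding dvd_def by blast
  moreover have "b ^ j \<ge> 1" using base by simp
  ultimately have "b ^ j = 1 + k * c" by simp
  then have "g * i * b ^ j = g * i + p * (i * c)" using \<open>p = g * k\<close> by (simp add: algebra_simps)
  then have "g * i * b ^ j mod p = g * i" using \<open>g * i < p\<close> by simp
  moreover have "j \<ge> 1" unfolding j_def using assms by (simp add: Suc_leI)
  ultimately show ?thesis
    unfolding on_zero_circuit_def using zero_iterate_state[OF \<open>g * i < p\<close>, of j] by auto
qed

lemma zero_circuit_state_multiple:
  assumes "p = g * k" "g dvd b ^ g" "q \<in> Q" "on_zero_circuit delta q"
  obtains i where "i < k" "q = state (g * i)"
proof -
  let ?f = "\<lambda>s. delta s 0"
  obtain j where "j \<ge> 1" "(?f ^^ j) q = q" using assms(4) unfolding on_zero_circuit_def by blast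
  then have "((?f ^^ j) ^^ g) q = q" by (induction g) simp_all
  then have "(?f ^^ (j * g)) q = q" by (simp add: funpow_mult)
  moreover obtain n where "n < p" "q = state n" using assms(3) states_eq by auto
  ultimately have q: "q = state (n * b ^ (j * g) mod p)" using zero_iterate_state by simp
  have "b ^ g dvd b ^ (j * g)" using \<open>j \<ge> 1\<close> by (simp add: le_imp_power_dvd)
  then have "g dvd n * b ^ (j * g) mod p"
    using assms(1,2) by (simp add: dvd_mod dvd_mult dvd_trans[of g "b ^ g"])
  then obtain i where i: "n * b ^ (j * g) mod p = g * i" by blast
  have "g * i < g * k" using modulus assms(1) i[symmetric] by simp
  then show ?thesis using that[of i] q i by simp
qed

lemma zero_circuit_states_eq:
  assumes "p = g * k" "coprime k b" "g dvd b ^ g"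
  shows "{q \<in> Q. on_zero_circuit delta q} = (\<lambda>i. state (g * i)) ` {..<k}"
proof (intro equalityI subsetI)
  fix q assume "q \<in> {q \<in> Q. on_zero_circuit delta q}"
  then obtain i where "i < k" "q = state (g * i)"
    using zero_circuit_state_multiple[OF assms(1,3)] by blast
  then show "q \<in> (\<lambda>i. state (g * i)) ` {..<k}" by blast
next
  fix q assume "q \<in> (\<lambda>i. state (g * i)) ` {..<k}"
  then obtain i where "i < k" "q = state (g * i)" by blast
  moreover have "g * i < p" using \<open>i < k\<close> \<open>p = g * k\<close> modulus by simp
  ultimately show "q \<in> {q \<in> Q. on_zero_circuit delta q}"
    using states_eq multiple_state_on_zero_circuit[OF assms(1,2)] by blast
qed

lemma inj_on_multiple_states:
  assumes "R \<subseteq> {..<p}" "proper p R" "p = g * k" "coprime k b"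
  shows "inj_on (\<lambda>i. state (g * i)) {..<k}"
proof (rule inj_onI)
  fix i j assume "i \<in> {..<k}" "j \<in> {..<k}" "state (g * i) = state (g * j)"
  moreover have "g * i < p" "g * j < p" using calculation modulus assms(3) by auto
  ultimately show "i = j"
    using nerode_equiv_multiples_eq[OF base modulus assms] state_eq_imp_nerode_equiv by simp
qed

end

theorem proposition23:
  fixes b p k :: nat and R :: "nat set"
  assumes "b > 1" and "p \<ge> 1" and "R \<subseteq> {..<p}" and "proper p R"
    and "k = (GREATEST d. d dvd p \<and> coprime d b)"
  shows "(\<exists>Q q0 F delta. is_minimisation b (A_lang b p R) Q q0 F delta)
       \<and> (\<forall>Q q0 F delta. is_minimisation b (A_lang b p R) Q q0 F delta
            \<longrightarrow> card {q \<in> Q. on_zero_circuit delta q} = k)"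
proof
  have "complete_dfa b {..<p} 0 R (A_delta b p)"
    unfolding complete_dfa_def A_delta_def using assms(2,3) by auto
  then show "\<exists>Q q0 F delta. is_minimisation b (A_lang b p R) Q q0 F delta"
    unfolding A_lang_def by (rule minimisation_exists)
  note k = greatest_coprime_divisor[OF assms(2,5)]
  define g where "g = p div k"
  have p: "p = g * k" unfolding g_def using k(1) by simp
  have "g dvd b ^ g"
    using p assms(2) prime_divisor_of_cofactor_dvd[OF p assms(2) k(2,3)]
    by (intro dvd_power_self_if_prime_divisors_dvd) (auto simp: Suc_le_eq)
  show "\<forall>Q q0 F delta. is_minimisation b (A_lang b p R) Q q0 F delta
            \<longrightarrow> card {q \<in> Q. on_zero_circuit delta q} = k"
  proof (intro allI impI)
    fix Q q0 F delta
    assume "is_minimisation b (A_lang b p R) Q q0 F delta"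
    then interpret A_minimisation b p R Q q0 F delta using assms(1,2) by unfold_locales
    show "card {q \<in> Q. on_zero_circuit delta q} = k"
      using zero_circuit_states_eq[OF p k(2) \<open>g dvd b ^ g\<close>] inj_on_multiple_states[OF assms(3,4) p k(2)]
      by (simp add: card_image)
  qed
qed

end
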